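(* For real $c$, $x\ge 0$ and $y\ge 1$, let $\Phi_y(x)=(y+1)\,y^c+x^c-(y+1)\,x$. Then: (a) if $1<c<\frac{1+\sqrt5}{2}$, there exist $x\ge 2$ and $y$ with $1\le y\le x$ such that $\Phi_y(x)<0$; (b) if $c=\frac{1+\sqrt5}{2}$, then $\Phi_y(x)\ge 0$ for all $x\ge 0$ and all $y\ge 1$. *)

theory Defs
  imports Complex_Main
begin

definition Phi :: "real \<Rightarrow> real \<Rightarrow> real \<Rightarrow> real" where
  "Phi c y x = (y + 1) * y powr c + x powr c - (y + 1) * x"

end

theory Submission
  imports Defs "HOL-Analysis.Analysis"
begin

(* For c > 1 the function x \<mapsto> x^c - a x on x \<ge> 0 attains its minimum -(c - 1)(a/c)^(c/(c-1)),
   which is Young's inequality with the conjugate exponents c and c/(c - 1).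
   At the golden ratio c/(c - 1) = c + 1 and c - 1 = 1/c, so with a = y + 1 the minimum of Phi
   over x is (y + 1) (y^c - c^-2 ((y + 1)/c)^c), which is nonnegative because y + 1 \<le> 2y \<le> c^2 y
   and c^c \<le> c^2.
   Below the golden ratio e = 1/(c - 1) exceeds c. Taking y + 1 = c s and x = s^e gives x^c = s x,
   so Phi = c s y^c - (c - 1) s x \<le> s (c^(c+1) s^c - (c - 1) s^e), which is negative for large s. *)

lemma linear_le_powr_plus_conjugate:
  fixes p a x :: real
  assumes "p > 1" "a \<ge> 0" "x \<ge> 0"
  shows "a * x \<le> x powr p + (p - 1) * (a / p) powr (p / (p - 1))"
proof -
  define q where "q = p / (p - 1)"
  have q: "q > 1" "1 / p + 1 / q = 1" "p / q = p - 1"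
    using assms(1) by (auto simp: q_def field_simps)
  have "x * (a / p) \<le> x powr p / p + (a / p) powr q / q"
    using Youngs_inequality[of p q x "a / p"] assms q by simp
  then have "p * (x * (a / p)) \<le> p * (x powr p / p + (a / p) powr q / q)"
    using assms(1) by (intro mult_left_mono) auto
  also have "\<dots> = x powr p + p / q * (a / p) powr q"
    using assms(1) by (simp add: field_simps)
  finally show ?thesis
    using assms(1) by (simp add: q(3) q_def ac_simps)
qed

lemma exists_powr_greater:
  fixes a b K :: real
  assumes "a > 0"
  obtains s where "s \<ge> b" "K < s powr a"
proof
  define s where "s = max (max b 1) ((\<bar>K\<bar> + 1) powr (1 / a))"
  show "s \<ge> b" by (simp add: s_def)
  have "((\<bar>K\<bar> + 1) powr (1 / a)) powr a \<le> s powr a"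
    using assms by (intro powr_mono2) (auto simp: s_def)
  moreover have "((\<bar>K\<bar> + 1) powr (1 / a)) powr a = \<bar>K\<bar> + 1"
    using assms by (simp add: powr_powr)
  ultimately show "K < s powr a" by linarith
qed

definition golden_ratio :: real where
  "golden_ratio = (1 + sqrt 5) / 2"

lemma golden_ratio_gt_1: "1 < golden_ratio"
  and golden_ratio_less_2: "golden_ratio < 2"
proof -
  have "1 < sqrt 5" "sqrt 5 < 3"
    by (simp_all add: real_less_rsqrt real_less_lsqrt)
  then show "1 < golden_ratio" "golden_ratio < 2"
    by (simp_all add: golden_ratio_def)
qed

lemma golden_ratio_squared: "golden_ratio\<^sup>2 = golden_ratio + 1"
  by (simp add: golden_ratio_def power2_eq_square field_simps)

lemma square_less_succ_if_less_golden_ratio: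
  fixes c :: real
  assumes "0 \<le> c" "c < golden_ratio"
  shows "c\<^sup>2 < c + 1"
proof -
  have "1 < sqrt 5"
    by (simp add: real_less_rsqrt)
  then have "0 < c - (1 - sqrt 5) / 2"
    using assms(1) by argo
  then have "(c - golden_ratio) * (c - (1 - sqrt 5) / 2) < 0"
    using assms(2) by (simp add: mult_neg_pos)
  moreover have "c\<^sup>2 - c - 1 = (c - golden_ratio) * (c - (1 - sqrt 5) / 2)"
    by (simp add: golden_ratio_def power2_eq_square field_simps)
  ultimately show ?thesis by simp
qed

lemma Phi_golden_ratio_nonneg:
  assumes "x \<ge> 0" "y \<ge> 1"
  shows "Phi golden_ratio y x \<ge> 0"
proof -
  define c where "c = golden_ratio"
  have c: "1 < c" "c \<le> 2" "c\<^sup>2 = c + 1"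
    using golden_ratio_gt_1 golden_ratio_less_2 golden_ratio_squared by (auto simp: c_def)
  then have c_minus_1: "c - 1 = 1 / c" and conjugate: "c / (c - 1) = c + 1"
    by (auto simp: field_simps power2_eq_square)
  have "1 \<le> c * y"
    using assms(2) c(1) by (simp add: mult_le_cancel_right1 order_trans[of 1 y])
  have base_le: "(y + 1) / c \<le> c * y"
  proof -
    have "y + 1 \<le> c\<^sup>2 * y"
      using \<open>1 \<le> c * y\<close> c(3) by (simp add: algebra_simps)
    then show ?thesis using c(1) by (simp add: field_simps power2_eq_square)
  qed
  have power_le: "(c * y) powr c \<le> c\<^sup>2 * y powr c"
  proof -
    have "c powr c \<le> c powr 2" using c by (intro powr_mono) auto
    then show ?thesis
      using c(1) assms(2) by (simp add: powr_mult mult_right_mono)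
  qed
  have "(y + 1) * x \<le> x powr c + (c - 1) * ((y + 1) / c) powr (c + 1)"
    using linear_le_powr_plus_conjugate[of c "y + 1" x] assms c(1) by (simp add: conjugate)
  also have "(c - 1) * ((y + 1) / c) powr (c + 1) = (y + 1) / c\<^sup>2 * ((y + 1) / c) powr c"
    using assms(2) c(1) by (simp add: c_minus_1 powr_add power2_eq_square)
  also have "\<dots> \<le> (y + 1) / c\<^sup>2 * (c * y) powr c"
    using assms(2) c(1) base_le by (intro mult_left_mono powr_mono2) auto
  also have "\<dots> \<le> (y + 1) / c\<^sup>2 * (c\<^sup>2 * y powr c)"
    using assms(2) power_le by (intro mult_left_mono) auto
  also have "\<dots> = (y + 1) * y powr c"
    using c(1) by simp
  finally show ?thesis
    unfolding Phi_def c_def by simp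
qed

lemma Phi_power_substitution_le:
  fixes c e s :: real
  assumes "c > 1" "e * (c - 1) = 1" "s > 0" "c * s \<ge> 1"
  shows "Phi c (c * s - 1) (s powr e) \<le> s * (c powr (c + 1) * s powr c - (c - 1) * s powr e)"
proof -
  have "(s powr e) powr c = s * s powr e"
    using assms(2,3) by (simp add: powr_powr powr_add algebra_simps)
  then have Phi_eq: "Phi c (c * s - 1) (s powr e) = c * s * (c * s - 1) powr c - (c - 1) * s * s powr e"
    by (simp add: Phi_def algebra_simps)
  have "(c * s - 1) powr c \<le> c powr c * s powr c"
    using assms by (simp add: powr_mult[symmetric] powr_mono2)
  then have "c * s * (c * s - 1) powr c \<le> s * (c powr (c + 1) * s powr c)"
    using assms(1,3) by (simp add: powr_add mult_left_mono algebra_simps)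
  then show ?thesis
    unfolding Phi_eq by (simp add: algebra_simps)
qed

lemma Phi_negative_below_golden_ratio:
  fixes c :: real
  assumes "1 < c" "c < golden_ratio"
  shows "\<exists>x y. x \<ge> 2 \<and> 1 \<le> y \<and> y \<le> x \<and> Phi c y x < 0"
proof -
  define e where "e = 1 / (c - 1)"
  have e: "e * (c - 1) = 1" "c < e"
    using assms(1) square_less_succ_if_less_golden_ratio[of c] assms
    by (auto simp: e_def field_simps power2_eq_square)
  obtain s where s: "s \<ge> 2" "c powr (c + 1) / (c - 1) < s powr (e - c)"
    using exists_powr_greater[of "e - c" 2] e(2) by auto
  have gap: "c powr (c + 1) * s powr c < (c - 1) * s powr e"
  proof -
    have "c powr (c + 1) < (c - 1) * s powr (e - c)"
      using s(2) assms(1) by (simp add: field_simps)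
    then have "c powr (c + 1) * s powr c < (c - 1) * s powr (e - c) * s powr c"
      using s(1) by simp
    moreover have "s powr (e - c) * s powr c = s powr e"
      using s(1) by (simp add: powr_add[symmetric])
    ultimately show ?thesis
      by (simp add: mult.assoc)
  qed
  define x where "x = s powr e"
  define y where "y = c * s - 1"
  have "s \<le> c * s" using assms(1) s(1) by simp
  have "s * (c powr (c + 1) * s powr c - (c - 1) * s powr e) < 0"
    using gap s(1) by (simp add: mult_pos_neg)
  then have "Phi c y x < 0"
    using Phi_power_substitution_le[of c e s] assms(1) e(1) s(1) \<open>s \<le> c * s\<close>
    unfolding x_def y_def by linarith
  moreover have "s \<le> x"
    using powr_mono[of 1 e s] e(2) assms(1) s(1) by (simp add: x_def)
  moreover have "y \<le> x"
  proof -
    have "c \<le> c powr (c + 1)" "s \<le> s powr c"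
      using powr_mono[of 1 "c + 1" c] powr_mono[of 1 c s] assms(1) s(1) by auto
    then have "c * s \<le> c powr (c + 1) * s powr c"
      using assms(1) s(1) by (intro mult_mono) auto
    moreover have "(c - 1) * x \<le> x"
      using assms golden_ratio_less_2 s(1) \<open>s \<le> x\<close> by (simp add: mult_right_mono)
    ultimately show ?thesis
      using gap unfolding x_def y_def by linarith
  qed
  moreover have "2 \<le> x" "1 \<le> y"
    using s(1) \<open>s \<le> x\<close> \<open>s \<le> c * s\<close> unfolding y_def by linarith+
  ultimately show ?thesis by blast
qed

theorem mainTheorem2:
  shows "(\<forall>c::real. 1 < c \<and> c < (1 + sqrt 5) / 2 \<longrightarrow>
            (\<exists>x y::real. x \<ge> 2 \<and> 1 \<le> y \<and> y \<le> x \<and> Phi c y x < 0))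
       \<and> (\<forall>x y::real. x \<ge> 0 \<longrightarrow> y \<ge> 1 \<longrightarrow> Phi ((1 + sqrt 5) / 2) y x \<ge> 0)"
  using Phi_negative_below_golden_ratio Phi_golden_ratio_nonneg
  unfolding golden_ratio_def by blast

end
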